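(* Let $K$ be any field, let $u(x,y)\in K[x,y]\setminus K$ be biased, and let $\rho=(\alpha x+p(y),\beta y+\gamma)$ be a nonaffine triangular automorphism of $K[x,y]$, where $\alpha,\beta\in K\setminus\{0\}$, $\gamma\in K$ and $p(y)\in K[y]$ has degree at least $2$. Then $\deg(\rho u)>\deg u$.
   Context: An automorphism $\rho=(f,g)$ of $K[x,y]$ means $\rho x=f$, $\rho y=g$, and $\rho u=u(f,g)$; so $\rho u=u(\alpha x+p(y),\beta y+\gamma)$. $\deg$ denotes total degree. For $0\ne u\in K[x,y]$, $|u|$ denotes the homogeneous component of $u$ of maximal total degree, and $u$ is called biased if $\deg_x|u|\ge\deg_y|u|$, where $\deg_x,\deg_y$ are the degrees in $x$ and in $y$. *)

theory Defs
  imports "HOL-Computational_Algebra.Polynomial"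
begin

text \<open>Bivariate polynomials K[x,y] are represented as K[y][x], i.e. the type
  'a poly poly: the outer variable is x, the coefficients are polynomials in y.
  The monomial x^i y^j has coefficient coeff (coeff u i) j.\<close>

definition tdeg :: "'a::zero poly poly \<Rightarrow> nat" where
  "tdeg u = Max (insert 0 {i + degree (coeff u i) | i. i \<le> degree u \<and> coeff u i \<noteq> 0})"

definition hom_comp :: "'a::comm_semiring_1 poly poly \<Rightarrow> nat \<Rightarrow> 'a poly poly" where
  "hom_comp u d = (\<Sum>i\<le>d. monom (monom (coeff (coeff u i) (d - i)) (d - i)) i)"

definition top_comp :: "'a::comm_semiring_1 poly poly \<Rightarrow> 'a poly poly" where
  "top_comp u = hom_comp u (tdeg u)"

definition deg_x :: "'a::zero poly poly \<Rightarrow> nat" where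
  "deg_x v = degree v"

definition deg_y :: "'a::zero poly poly \<Rightarrow> nat" where
  "deg_y v = Max {degree (coeff v i) | i. i \<le> degree v}"

definition biased :: "'a::comm_semiring_1 poly poly \<Rightarrow> bool" where
  "biased u \<longleftrightarrow> u \<noteq> 0 \<and> deg_x (top_comp u) \<ge> deg_y (top_comp u)"

definition const2 :: "'a::zero \<Rightarrow> 'a poly poly" where
  "const2 c = [:[:c:]:]"

definition subst2 :: "'a::comm_ring_1 poly poly \<Rightarrow> 'a poly poly \<Rightarrow> 'a poly poly \<Rightarrow> 'a poly poly" where
  "subst2 u f g = (\<Sum>i\<le>degree u. (\<Sum>j\<le>degree (coeff u i). smult [:coeff (coeff u i) j:] (g ^ j)) * f ^ i)"

definition ypoly :: "'a::zero poly \<Rightarrow> 'a poly poly" where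
  "ypoly p = [:p:]"

definition X2 :: "'a::comm_semiring_1 poly poly" where
  "X2 = [:0, 1:]"

definition Y2 :: "'a::comm_semiring_1 poly poly" where
  "Y2 = [:[:0, 1:]:]"

end

theory Submission
  imports Defs
begin

text \<open>Write \<rho> as (x, \<beta>y + \<gamma>) followed by (\<alpha>x + p(y), y). The first map preserves the
  y-degree of every x-coefficient, hence the total degree and the data supplied by
  biasedness, so only the second one needs work. Give x the weight m = deg p and y the
  weight 1, and let M be the weighted degree of v = u(x, \<beta>y + \<gamma>). In v(\<alpha>x + p, y) the
  coefficient of x^s y^(M - ms) is the s-th coefficient of \<phi>(z) = \<psi>(l + \<alpha>z), where l is
  the leading coefficient of p and \<psi> the weighted leading form of v with y set to 1.
  Biasedness yields a monomial x^a y^(d-a) of u with d = deg u \<le> 2a; it forces every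
  exponent of \<psi> to be at least a, so (l + \<alpha>z)^a divides \<phi>. As l \<noteq> 0, the lowest nonzero
  coefficient s of \<phi> satisfies s + a \<le> deg \<psi>, and the monomial x^s y^(M - ms) of \<rho>u
  then has total degree greater than d.\<close>

lemma pcompose_monom: "pcompose (monom c n) q = smult c (q ^ n)"
  by (induction n) (simp_all add: monom_0 monom_Suc pcompose_pCons)

lemma pcompose_eq_sum:
  assumes "degree p \<le> n"
  shows "pcompose p q = (\<Sum>i\<le>n. smult (coeff p i) (q ^ i))"
proof -
  have "pcompose p q = pcompose (\<Sum>i\<le>n. monom (coeff p i) i) q"
    by (simp add: poly_as_sum_of_monoms' assms)
  also have "\<dots> = (\<Sum>i\<le>n. smult (coeff p i) (q ^ i))"
    by (simp add: pcompose_sum pcompose_monom)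
  finally show ?thesis .
qed

lemma coeff_linear_poly_power:
  fixes a b :: "'a::comm_semiring_1"
  shows "coeff ([:a, b:] ^ n) k = of_nat (n choose k) * b ^ k * a ^ (n - k)"
proof -
  have "[:a, b:] ^ n = (\<Sum>j\<le>n. of_nat (n choose j) * monom b 1 ^ j * [:a:] ^ (n - j))"
    using binomial_ring[of "monom b 1" "[:a:]" n]
    by (simp add: add.commute monom_altdef)
  also have "\<dots> = (\<Sum>j\<le>n. monom (of_nat (n choose j) * b ^ j * a ^ (n - j)) j)"
    by (intro sum.cong refl) (simp add: monom_power poly_const_pow of_nat_poly smult_monom mult_ac)
  finally show ?thesis
    by (simp add: coeff_sum coeff_monom binomial_eq_0 not_le)
qed

lemma coeff_mult_power_at_degree_bound:
  fixes h p :: "'a::idom poly"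
  assumes "degree h + degree p * n \<le> N"
  shows "coeff (h * p ^ n) N =
    (if degree h + degree p * n = N then lead_coeff h * lead_coeff p ^ n else 0)"
proof (cases "degree h + degree p * n = N")
  case True
  show ?thesis
  proof (cases "p = 0 \<and> n > 0")
    case False
    then have "degree (p ^ n) = degree p * n"
      by (auto simp: degree_power_eq)
    then show ?thesis
      using True coeff_mult_degree_sum[of h "p ^ n"] unfolding lead_coeff_power[symmetric] by simp
  qed (use True in \<open>simp add: zero_power\<close>)
next
  case False
  have "degree (h * p ^ n) \<le> degree h + degree p * n"
    using degree_mult_le[of h "p ^ n"] degree_power_le[of p n] by (simp add: mult.commute)
  then show ?thesis
    using False assms by (simp add: coeff_eq_0)
qed

lemma coeff_order_0_nonzero:
  fixes p :: "'a::idom poly"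
  assumes "p \<noteq> 0"
  shows "coeff p (order 0 p) \<noteq> 0"
proof -
  have "\<not> monom 1 (Suc (order 0 p)) dvd p" and "monom 1 (order 0 p) dvd p"
    using monom_1_dvd_iff[OF assms] by auto
  then show ?thesis
    unfolding monom_1_dvd_iff' by (metis less_Suc_eq)
qed

lemma order_0_add_degree_le:
  fixes f q :: "'a::idom poly"
  assumes "q dvd f" "f \<noteq> 0" "poly q 0 \<noteq> 0"
  shows "order 0 f + degree q \<le> degree f"
proof -
  obtain g where f: "f = q * g" using assms(1) by blast
  with assms(2) have "q \<noteq> 0" "g \<noteq> 0" by auto
  have "order 0 f = order 0 g"
    using f assms(2,3) by (simp add: order_mult order_0I)
  also have "\<dots> \<le> degree g"
    using \<open>g \<noteq> 0\<close> by (rule order_degree)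
  finally show ?thesis
    using f \<open>q \<noteq> 0\<close> \<open>g \<noteq> 0\<close> by (simp add: degree_mult_eq)
qed

lemma subst2_const_y:
  fixes u f :: "'a::comm_ring_1 poly poly"
  shows "subst2 u f [:q:] = pcompose (map_poly (\<lambda>c. pcompose c q) u) f"
proof -
  have inner: "(\<Sum>j\<le>degree c. smult [:coeff c j:] ([:q:] ^ j)) = [:pcompose c q:]" for c
    by (simp add: pcompose_eq_sum[OF order_refl] poly_const_pow sum_to_poly)
  have "subst2 u f [:q:] = (\<Sum>i\<le>degree u. smult (pcompose (coeff u i) q) (f ^ i))"
    unfolding subst2_def inner by simp
  also have "\<dots> = pcompose (map_poly (\<lambda>c. pcompose c q) u) f"
    by (simp add: pcompose_eq_sum[OF map_poly_degree_leq] coeff_map_poly)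
  finally show ?thesis .
qed

definition wdeg :: "nat \<Rightarrow> 'a::zero poly poly \<Rightarrow> nat" where
  "wdeg m v = Max (insert 0 {m * i + degree (coeff v i) | i. coeff v i \<noteq> 0})"

lemma finite_weighted_degrees: "finite {m * i + degree (coeff v i) | i. coeff v i \<noteq> 0}"
proof (rule finite_subset)
  show "{m * i + degree (coeff v i) | i. coeff v i \<noteq> 0} \<subseteq>
      (\<lambda>i. m * i + degree (coeff v i)) ` {..degree v}"
    using le_degree by blast
qed simp

lemma wdeg_ge:
  assumes "coeff v i \<noteq> 0"
  shows "m * i + degree (coeff v i) \<le> wdeg m v"
  unfolding wdeg_def using assms finite_weighted_degrees by (intro Max_ge) auto

lemma wdeg_attained:
  assumes "v \<noteq> 0"
  obtains i where "coeff v i \<noteq> 0" "m * i + degree (coeff v i) = wdeg m v"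
proof -
  let ?S = "{m * i + degree (coeff v i) | i. coeff v i \<noteq> 0}"
  have "m * degree v + degree (lead_coeff v) \<in> ?S"
    using assms by auto
  then have "?S \<noteq> {}" by blast
  then have "wdeg m v = Max ?S"
    unfolding wdeg_def using Max_insert[OF finite_weighted_degrees \<open>?S \<noteq> {}\<close>] by simp
  also have "\<dots> \<in> ?S"
    using finite_weighted_degrees \<open>?S \<noteq> {}\<close> by (rule Max_in)
  finally have "wdeg m v \<in> ?S" .
  then show ?thesis
    using that by auto
qed

lemma wdeg_map_poly:
  assumes "\<And>c. f c = 0 \<longleftrightarrow> c = 0" "\<And>c. degree (f c) = degree c"
  shows "wdeg m (map_poly f v) = wdeg m v"
  unfolding wdeg_def using assms by (simp add: coeff_map_poly)

lemma tdeg_eq_wdeg: "tdeg v = wdeg 1 v"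
  unfolding tdeg_def wdeg_def by (metis (lifting) le_degree mult_1)

lemma tdeg_ge_coeff:
  assumes "coeff (coeff v s) t \<noteq> 0"
  shows "s + t \<le> tdeg v"
proof -
  have "coeff v s \<noteq> 0" using assms by auto
  then have "s + degree (coeff v s) \<le> tdeg v"
    using wdeg_ge[of v s 1] by (simp add: tdeg_eq_wdeg)
  moreover have "t \<le> degree (coeff v s)"
    using assms by (rule le_degree)
  ultimately show ?thesis by simp
qed

lemma tdeg_pos_if_not_const:
  assumes "v \<notin> range const2"
  shows "0 < tdeg v"
proof (rule ccontr)
  assume "\<not> 0 < tdeg v"
  then have zero: "coeff v i \<noteq> 0 \<Longrightarrow> i = 0 \<and> degree (coeff v i) = 0" for i
    using wdeg_ge[of v i 1] by (auto simp: tdeg_eq_wdeg)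
  have "degree v = 0"
    using zero[of "degree v"] by (cases "v = 0") auto
  moreover have "degree (coeff v 0) = 0"
    using zero by (metis degree_0)
  ultimately have "v = const2 (coeff (coeff v 0) 0)"
    unfolding const2_def by (simp add: degree_0_id)
  with assms show False by blast
qed

lemma coeff_hom_comp:
  "coeff (hom_comp u d) k = (if k \<le> d then monom (coeff (coeff u k) (d - k)) (d - k) else 0)"
  unfolding hom_comp_def by (simp add: coeff_sum coeff_monom)

lemma biased_top_term:
  fixes u :: "'a::comm_semiring_1 poly poly"
  assumes "biased u"
  obtains a where "coeff u a \<noteq> 0" "a + degree (coeff u a) = tdeg u" "tdeg u \<le> 2 * a"
proof -
  define d where "d = tdeg u"
  define T where "T = top_comp u"
  have coeff_T: "coeff T k = (if k \<le> d then monom (coeff (coeff u k) (d - k)) (d - k) else 0)" for k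
    unfolding T_def top_comp_def d_def by (rule coeff_hom_comp)
  have "u \<noteq> 0"
    using assms unfolding biased_def by simp
  then obtain i where "coeff u i \<noteq> 0" "1 * i + degree (coeff u i) = d"
    unfolding d_def tdeg_eq_wdeg by (rule wdeg_attained)
  then have "coeff T i \<noteq> 0"
    by (auto simp: coeff_T)
  then have "T \<noteq> 0" by auto
  define a where "a = degree T"
  have "coeff T a \<noteq> 0"
    using \<open>T \<noteq> 0\<close> by (simp add: a_def)
  then have "a \<le> d" and top: "coeff (coeff u a) (d - a) \<noteq> 0"
    by (auto simp: coeff_T split: if_splits)
  have "d - a = degree (coeff T a)"
    using \<open>a \<le> d\<close> top by (simp add: coeff_T degree_monom_eq)
  also have "\<dots> \<le> deg_y T"
    unfolding deg_y_def a_def by (intro Max_ge) auto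
  also have "\<dots> \<le> a"
    using assms unfolding biased_def deg_x_def T_def a_def by simp
  finally have "d \<le> 2 * a"
    by linarith
  have "coeff u a \<noteq> 0"
    using top by auto
  moreover have "a + degree (coeff u a) = d"
    using wdeg_ge[of u a 1] le_degree[OF top] \<open>a \<le> d\<close> \<open>coeff u a \<noteq> 0\<close>
    by (simp add: d_def tdeg_eq_wdeg)
  ultimately show ?thesis
    using \<open>d \<le> 2 * a\<close> unfolding d_def by (rule that)
qed

text \<open>The component of v of top weighted degree is the sum of
  lead_coeff (coeff v i) x^i y^(degree (coeff v i)) over the indices selected here;
  wlead m v is that component with y set to 1.\<close>

definition wlead :: "nat \<Rightarrow> 'a::comm_monoid_add poly poly \<Rightarrow> 'a poly" where
  "wlead m v = (\<Sum>i\<le>degree v.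
     monom (if m * i + degree (coeff v i) = wdeg m v then lead_coeff (coeff v i) else 0) i)"

lemma coeff_wlead:
  "coeff (wlead m v) i =
    (if m * i + degree (coeff v i) = wdeg m v then lead_coeff (coeff v i) else 0)"
  by (cases "i \<le> degree v") (auto simp: wlead_def coeff_sum coeff_monom coeff_eq_0)

lemma degree_wlead_le: "degree (wlead m v) \<le> degree v"
  by (rule degree_le) (simp add: coeff_wlead coeff_eq_0)

lemma wlead_nonzero:
  assumes "v \<noteq> 0"
  shows "wlead m v \<noteq> 0"
proof -
  obtain i where "coeff v i \<noteq> 0" "m * i + degree (coeff v i) = wdeg m v"
    using wdeg_attained[OF assms] .
  then have "coeff (wlead m v) i \<noteq> 0" by (simp add: coeff_wlead)
  then show ?thesis by auto
qed

text \<open>As an element of K[y][x], [:p, [:\<alpha>:]:] is \<alpha>x + p(y), so pcompose v [:p, [:\<alpha>:]:]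
  is v(\<alpha>x + p(y), y).\<close>

lemma coeff_pcompose_at_wdeg:
  fixes v :: "'a::idom poly poly" and p :: "'a poly"
  defines "m \<equiv> degree p"
  assumes "m * s \<le> wdeg m v"
  shows "coeff (coeff (pcompose v [:p, [:\<alpha>:]:]) s) (wdeg m v - m * s) =
    coeff (pcompose (wlead m v) [:lead_coeff p, \<alpha>:]) s"
proof -
  define M where "M = wdeg m v"
  have summand: "coeff (coeff v i * coeff ([:p, [:\<alpha>:]:] ^ i) s) (M - m * s) =
      coeff (wlead m v) i * coeff ([:lead_coeff p, \<alpha>:] ^ i) s" for i
  proof (cases "s \<le> i \<and> coeff v i \<noteq> 0")
    case True
    let ?c = "of_nat (i choose s) * \<alpha> ^ s" and ?e = "degree (coeff v i)"
    have "m * i + ?e \<le> M"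
      unfolding M_def using True by (intro wdeg_ge) simp
    moreover have "m * (i - s) = m * i - m * s" and "m * s \<le> m * i"
      using True by (simp_all add: diff_mult_distrib2)
    ultimately have bound: "?e + degree p * (i - s) \<le> M - m * s"
      and top_iff: "?e + degree p * (i - s) = M - m * s \<longleftrightarrow> m * i + ?e = M"
      unfolding m_def by linarith+
    have "coeff ([:p, [:\<alpha>:]:] ^ i) s = smult ?c (p ^ (i - s))"
      by (simp add: coeff_linear_poly_power of_nat_poly poly_const_pow mult.commute)
    then have "coeff (coeff v i * coeff ([:p, [:\<alpha>:]:] ^ i) s) (M - m * s) =
        ?c * coeff (coeff v i * p ^ (i - s)) (M - m * s)"
      by simp
    also have "\<dots> = ?c * (if m * i + ?e = M then lead_coeff (coeff v i) * lead_coeff p ^ (i - s) else 0)"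
      by (simp only: coeff_mult_power_at_degree_bound[OF bound] top_iff)
    also have "\<dots> = coeff (wlead m v) i * coeff ([:lead_coeff p, \<alpha>:] ^ i) s"
      by (simp add: coeff_wlead coeff_linear_poly_power M_def mult_ac)
    finally show ?thesis .
  qed (auto simp: coeff_linear_poly_power coeff_wlead binomial_eq_0)
  have "coeff (coeff (pcompose v [:p, [:\<alpha>:]:]) s) (M - m * s) =
      (\<Sum>i\<le>degree v. coeff (coeff v i * coeff ([:p, [:\<alpha>:]:] ^ i) s) (M - m * s))"
    by (simp add: pcompose_eq_sum[OF order_refl] coeff_sum)
  also have "\<dots> = coeff (pcompose (wlead m v) [:lead_coeff p, \<alpha>:]) s"
    by (simp add: summand pcompose_eq_sum[OF degree_wlead_le] coeff_sum)
  finally show ?thesis by (simp add: M_def)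
qed

lemma tdeg_increase_arith:
  fixes m a e s t M :: nat
  assumes "2 \<le> m" "1 \<le> a" "e \<le> a" "m * a + e \<le> M" "m * s + m * a \<le> M" "m * s + t = M"
  shows "a + e < s + t"
proof -
  have "m * a \<le> t" using assms(5,6) by linarith
  then have "(m - 1) * (m * a) \<le> (m - 1) * t" by simp
  moreover have "e < m * a"
  proof -
    have "2 * a \<le> m * a" using assms(1) by simp
    then show ?thesis using assms(2,3) by linarith
  qed
  then have "(m - 1) * e < (m - 1) * (m * a)"
    using assms(1) by simp
  moreover have "m * (s + t) = M + (m - 1) * t" "m * (a + e) = m * a + e + (m - 1) * e"
    using assms(1,6) by (cases m; simp add: algebra_simps)+
  ultimately have "m * (a + e) < m * (s + t)"
    using assms(4) by linarith
  then show ?thesis by simp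
qed

lemma tdeg_less_tdeg_pcompose:
  fixes v :: "'a::idom poly poly" and p :: "'a poly"
  assumes "2 \<le> degree p" "\<alpha> \<noteq> 0"
    and "coeff v a \<noteq> 0" "a + degree (coeff v a) = tdeg v" "0 < tdeg v" "tdeg v \<le> 2 * a"
  shows "tdeg v < tdeg (pcompose v [:p, [:\<alpha>:]:])"
proof -
  define m where "m = degree p"
  define M where "M = wdeg m v"
  define L where "L = [:lead_coeff p, \<alpha>:]"
  define \<psi> where "\<psi> = wlead m v"
  define \<phi> where "\<phi> = pcompose \<psi> L"
  have "v \<noteq> 0" "p \<noteq> 0"
    using assms(1,3) by auto
  have M_ge_a: "m * a + degree (coeff v a) \<le> M"
    unfolding M_def using assms(3) by (rule wdeg_ge)
  have \<psi>_support: "coeff v i \<noteq> 0 \<and> m * i + degree (coeff v i) = M" if "coeff \<psi> i \<noteq> 0" for i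
    using that by (auto simp: \<psi>_def M_def coeff_wlead split: if_splits)
  have "a \<le> i" if "coeff \<psi> i \<noteq> 0" for i
  proof (rule ccontr)
    assume "\<not> a \<le> i"
    then have "m * i + m * (a - i) = m * a"
      by (simp flip: add_mult_distrib2)
    moreover have "2 * (a - i) \<le> m * (a - i)"
      using assms(1) m_def by simp
    moreover have "i + degree (coeff v i) \<le> tdeg v"
      using wdeg_ge[of v i 1] \<psi>_support[OF that] by (simp add: tdeg_eq_wdeg)
    ultimately show False
      using \<psi>_support[OF that] M_ge_a assms(4) \<open>\<not> a \<le> i\<close> by linarith
  qed
  then have "monom 1 a dvd \<psi>"
    unfolding monom_1_dvd_iff' using not_le by blast
  then have dvd: "L ^ a dvd \<phi>"
    unfolding \<phi>_def by (metis dvd_def pcompose_mult pcompose_monom smult_1_left)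
  have "degree L = 1" "degree (L ^ a) = a" "poly (L ^ a) 0 \<noteq> 0"
    using assms(2) \<open>p \<noteq> 0\<close> by (simp_all add: L_def degree_power_eq)
  have "\<psi> \<noteq> 0"
    unfolding \<psi>_def using \<open>v \<noteq> 0\<close> by (rule wlead_nonzero)
  then have "\<phi> \<noteq> 0" "degree \<phi> = degree \<psi>"
    using \<open>degree L = 1\<close> by (simp_all add: \<phi>_def pcompose_eq_0_iff degree_pcompose)
  define s where "s = order 0 \<phi>"
  have "s + a \<le> degree \<psi>"
    using order_0_add_degree_le[OF dvd \<open>\<phi> \<noteq> 0\<close> \<open>poly (L ^ a) 0 \<noteq> 0\<close>]
      \<open>degree (L ^ a) = a\<close> \<open>degree \<phi> = degree \<psi>\<close>
    by (simp add: s_def)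
  moreover have "m * degree \<psi> \<le> M"
    using \<psi>_support[of "degree \<psi>"] \<open>\<psi> \<noteq> 0\<close> by simp
  ultimately have sM: "m * s + m * a \<le> M"
    by (metis add_mult_distrib2 le_trans mult_le_mono2)
  have "coeff (coeff (pcompose v [:p, [:\<alpha>:]:]) s) (M - m * s) = coeff \<phi> s"
    using coeff_pcompose_at_wdeg[of p s v \<alpha>] sM
    by (simp add: M_def m_def \<phi>_def \<psi>_def L_def)
  also have "\<dots> \<noteq> 0"
    unfolding s_def using \<open>\<phi> \<noteq> 0\<close> by (rule coeff_order_0_nonzero)
  finally have "s + (M - m * s) \<le> tdeg (pcompose v [:p, [:\<alpha>:]:])"
    by (rule tdeg_ge_coeff)
  moreover have "tdeg v < s + (M - m * s)"
    using tdeg_increase_arith[of m a "degree (coeff v a)" M s "M - m * s"]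
      assms(1,4-6) M_ge_a sM m_def by linarith
  ultimately show ?thesis by simp
qed

theorem proposition4p1:
  fixes u :: "'a::field poly poly" and \<alpha> \<beta> \<gamma> :: 'a and p :: "'a poly"
  assumes "u \<notin> range const2"
    and "biased u"
    and "\<alpha> \<noteq> 0" and "\<beta> \<noteq> 0"
    and "degree p \<ge> 2"
  shows "tdeg (subst2 u (smult [:\<alpha>:] X2 + ypoly p) (smult [:\<beta>:] Y2 + const2 \<gamma>)) > tdeg u"
proof -
  define v where "v = map_poly (\<lambda>c. pcompose c [:\<gamma>, \<beta>:]) u"
  have shift_degree: "degree (pcompose c [:\<gamma>, \<beta>:]) = degree c"
    and shift_eq_0: "pcompose c [:\<gamma>, \<beta>:] = 0 \<longleftrightarrow> c = 0" for c
    using assms(4) by (simp_all add: degree_pcompose pcompose_eq_0_iff)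
  have coeff_v: "coeff v i = pcompose (coeff u i) [:\<gamma>, \<beta>:]" for i
    unfolding v_def by (simp add: coeff_map_poly)
  have "tdeg v = tdeg u"
    unfolding v_def tdeg_eq_wdeg by (rule wdeg_map_poly[OF shift_eq_0 shift_degree])
  have "subst2 u (smult [:\<alpha>:] X2 + ypoly p) (smult [:\<beta>:] Y2 + const2 \<gamma>) =
      subst2 u [:p, [:\<alpha>:]:] [:[:\<gamma>, \<beta>:]:]"
    by (simp add: X2_def Y2_def ypoly_def const2_def)
  also have "\<dots> = pcompose v [:p, [:\<alpha>:]:]"
    unfolding v_def by (rule subst2_const_y)
  finally have rho_u: "subst2 u (smult [:\<alpha>:] X2 + ypoly p) (smult [:\<beta>:] Y2 + const2 \<gamma>) =
      pcompose v [:p, [:\<alpha>:]:]" .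
  obtain a where "coeff u a \<noteq> 0" "a + degree (coeff u a) = tdeg u" "tdeg u \<le> 2 * a"
    using assms(2) by (rule biased_top_term)
  then have "coeff v a \<noteq> 0" "a + degree (coeff v a) = tdeg v" "0 < tdeg v" "tdeg v \<le> 2 * a"
    using tdeg_pos_if_not_const[OF assms(1)]
    by (simp_all add: coeff_v shift_degree shift_eq_0 \<open>tdeg v = tdeg u\<close>)
  then have "tdeg v < tdeg (pcompose v [:p, [:\<alpha>:]:])"
    by (rule tdeg_less_tdeg_pcompose[OF assms(5,3)])
  then show ?thesis
    unfolding rho_u \<open>tdeg v = tdeg u\<close> .
qed

end
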